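(* There is an absolute constant $c>0$ such that the following holds. For any $N,T\ge1$, suppose the interference graph on the $N$ individuals has no edges. Then for any (possibly adaptive) design and any estimator $\widehat\Delta$ (a function of the observed treatments $W$ and outcomes $Y$), there exists an instance of the model (satisfying the model assumptions, with the edgeless interference graph) under which $\mathbb E[(\widehat\Delta-\Delta)^2]\ge c/(NT)$; that is, ${\rm MSE}(\widehat\Delta)=\Omega(1/(NT))$.
   Context: Model. There are $N$ individuals $U$ ($|U|=N$) and $T$ rounds $[T]=\{1,\dots,T\}$; with an edgeless interference graph each individual's neighborhood is $\mathcal N(i)=\{i\}$. Treatments $W\in\{0,1\}^{N\times T}$ are assigned by a design (here possibly adaptive, i.e., treatments may depend on previously observed data). Each individual has a state $S_{it}$ in a state space $\mathcal S$ evolving as a Markov chain with kernel $P^{W_{it}}_{it}$ depending on its own treatment; outcomes are $Y_{it}=\mu_{it}(S_{it},W_{it})+\epsilon_{it}$ with $\mu_{it}\in[0,1]$ and mean-zero noise with $\mathbb E[\epsilon_{it}\epsilon_{i't'}\mid S,W]$ bounded by $\sigma^2\mathbbm 1(i=i',t=t')$; the kernels satisfy a rapid-mixing contraction $d_{\rm TV}(fP,f'P)\le e^{-1/t_{\rm mix}}d_{\rm TV}(f,f')$. Only $W$ and $Y$ are observed. The estimand is the global average treatment effect $\Delta=\frac1{NT}\sum_{(i,t)}\big(\mathbb E[Y_{it}\mid W=\mathbf 1]-\mathbb E[Y_{it}\mid W=\mathbf 0]\big)$. *)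

theory Defs
  imports "HOL-Probability.Probability"
begin

text \<open>Individuals are 0..<N, rounds are 1..T, states are natural numbers.
  Conventions for the arguments:
   init i                 : distribution of the initial state S_{i,1}
   P i t w s              : kernel P^w_{it}, distribution of S_{i,t+1} given S_{it} = s, W_{it} = w
   mu i t s w             : mean outcome mu_{it}(s,w)
   noise i t s w          : distribution of eps_{it} given S_{it} = s, W_{it} = w
   design W Y t           : (adaptive) distribution of the treatment vector of round t,
                            given the observed treatments W and outcomes Y of rounds < t
  With an edgeless interference graph, everything about individual i depends only
  on i's own treatment.\<close>

type_synonym trajectory = "(nat \<Rightarrow> nat \<Rightarrow> nat) \<times> (nat \<Rightarrow> nat \<Rightarrow> bool) \<times> (nat \<Rightarrow> nat \<Rightarrow> real)"
type_synonym design = "(nat \<Rightarrow> nat \<Rightarrow> bool) \<Rightarrow> (nat \<Rightarrow> nat \<Rightarrow> real) \<Rightarrow> nat \<Rightarrow> (nat \<Rightarrow> bool) pmf"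

fun traj :: "nat \<Rightarrow> (nat \<Rightarrow> nat pmf) \<Rightarrow> (nat \<Rightarrow> nat \<Rightarrow> bool \<Rightarrow> nat \<Rightarrow> nat pmf)
    \<Rightarrow> (nat \<Rightarrow> nat \<Rightarrow> nat \<Rightarrow> bool \<Rightarrow> real) \<Rightarrow> (nat \<Rightarrow> nat \<Rightarrow> nat \<Rightarrow> bool \<Rightarrow> real pmf)
    \<Rightarrow> design \<Rightarrow> nat \<Rightarrow> trajectory pmf" where
  "traj N init P mu noise design 0 =
     map_pmf (\<lambda>s0. (\<lambda>i u. if u = 1 then s0 i else 0, \<lambda>i u. False, \<lambda>i u. 0))
       (Pi_pmf {..<N} 0 init)"
| "traj N init P mu noise design (Suc k) =
     bind_pmf (traj N init P mu noise design k) (\<lambda>(S, W, Y).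
     bind_pmf (design W Y (Suc k)) (\<lambda>w.
     bind_pmf (Pi_pmf {..<N} 0 (\<lambda>i. map_pmf (\<lambda>e. mu i (Suc k) (S i (Suc k)) (w i) + e)
                                   (noise i (Suc k) (S i (Suc k)) (w i)))) (\<lambda>y.
     bind_pmf (Pi_pmf {..<N} 0 (\<lambda>i. P i (Suc k) (w i) (S i (Suc k)))) (\<lambda>s'.
     return_pmf (\<lambda>i u. if u = Suc (Suc k) then s' i else S i u,
                 \<lambda>i u. if u = Suc k then (i < N \<and> w i) else W i u,
                 \<lambda>i u. if u = Suc k then y i else Y i u)))))"

definition dtv :: "nat pmf \<Rightarrow> nat pmf \<Rightarrow> real" where
  "dtv p q = (SUP A. \<bar>measure_pmf.prob p A - measure_pmf.prob q A\<bar>)"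

definition valid_instance :: "real \<Rightarrow> real \<Rightarrow> nat \<Rightarrow> nat \<Rightarrow> (nat \<Rightarrow> nat pmf)
    \<Rightarrow> (nat \<Rightarrow> nat \<Rightarrow> bool \<Rightarrow> nat \<Rightarrow> nat pmf)
    \<Rightarrow> (nat \<Rightarrow> nat \<Rightarrow> nat \<Rightarrow> bool \<Rightarrow> real) \<Rightarrow> (nat \<Rightarrow> nat \<Rightarrow> nat \<Rightarrow> bool \<Rightarrow> real pmf) \<Rightarrow> bool" where
  "valid_instance \<sigma> tmix N T init P mu noise \<longleftrightarrow>
     (\<forall>i<N. \<forall>t\<in>{1..T}. \<forall>s w. 0 \<le> mu i t s w \<and> mu i t s w \<le> 1) \<and>
     (\<forall>i<N. \<forall>t\<in>{1..T}. \<forall>s w.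
        integrable (measure_pmf (noise i t s w)) (\<lambda>e. e) \<and>
        integrable (measure_pmf (noise i t s w)) (\<lambda>e. e\<^sup>2) \<and>
        measure_pmf.expectation (noise i t s w) (\<lambda>e. e) = 0 \<and>
        measure_pmf.expectation (noise i t s w) (\<lambda>e. e\<^sup>2) \<le> \<sigma>\<^sup>2) \<and>
     (\<forall>i<N. \<forall>t\<in>{1..T}. \<forall>w f f'.
        dtv (bind_pmf f (P i t w)) (bind_pmf f' (P i t w)) \<le> exp (- 1 / tmix) * dtv f f')"

definition const_design :: "bool \<Rightarrow> design" where
  "const_design b = (\<lambda>W Y t. return_pmf (\<lambda>i. b))"

definition GATE :: "nat \<Rightarrow> nat \<Rightarrow> (nat \<Rightarrow> nat pmf) \<Rightarrow> (nat \<Rightarrow> nat \<Rightarrow> bool \<Rightarrow> nat \<Rightarrow> nat pmf)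
    \<Rightarrow> (nat \<Rightarrow> nat \<Rightarrow> nat \<Rightarrow> bool \<Rightarrow> real) \<Rightarrow> (nat \<Rightarrow> nat \<Rightarrow> nat \<Rightarrow> bool \<Rightarrow> real pmf) \<Rightarrow> real" where
  "GATE N T init P mu noise =
     (1 / (real N * real T)) *
     (\<Sum>i<N. \<Sum>t\<in>{1..T}.
        measure_pmf.expectation (traj N init P mu noise (const_design True) T) (\<lambda>(S, W, Y). Y i t)
      - measure_pmf.expectation (traj N init P mu noise (const_design False) T) (\<lambda>(S, W, Y). Y i t))"

definition MSE :: "nat \<Rightarrow> nat \<Rightarrow> (nat \<Rightarrow> nat pmf) \<Rightarrow> (nat \<Rightarrow> nat \<Rightarrow> bool \<Rightarrow> nat \<Rightarrow> nat pmf)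
    \<Rightarrow> (nat \<Rightarrow> nat \<Rightarrow> nat \<Rightarrow> bool \<Rightarrow> real) \<Rightarrow> (nat \<Rightarrow> nat \<Rightarrow> nat \<Rightarrow> bool \<Rightarrow> real pmf)
    \<Rightarrow> design \<Rightarrow> ((nat \<Rightarrow> nat \<Rightarrow> bool) \<Rightarrow> (nat \<Rightarrow> nat \<Rightarrow> real) \<Rightarrow> real) \<Rightarrow> ennreal" where
  "MSE N T init P mu noise design est =
     (\<integral>\<^sup>+ (S, W, Y). ennreal ((est W Y - GATE N T init P mu noise)\<^sup>2)
        \<partial>measure_pmf (traj N init P mu noise design T))"

end

(*
  Let the states and the noise be trivial and read the mean outcome mu_it(s, w) = Z(i, t, w)
  off a table Z of independent fair coins.  Round t reveals only the entries Z(i, t, W_it).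
  Drawing each coin lazily, at the moment its cell is revealed, shows that even for an adaptive
  design the NT counterfactual entries Z(i, t, \<not> W_it) are, given the observations, still
  independent fair coins.  Since NT * Delta contains each of them with coefficient +1 or -1, any
  estimate of Delta has posterior mean square error at least (NT/4) / (NT)^2 = 1/(4NT).  This
  bounds the Bayes risk, so some table Z has MSE at least 1/(8NT).
*)

theory Submission
  imports Defs
begin

definition fair_coins :: "'a set \<Rightarrow> ('a \<Rightarrow> bool) pmf" where
  "fair_coins D = Pi_pmf D False (\<lambda>_. bernoulli_pmf (1/2))"

lemma fair_coins_insert:
  assumes "finite D" "x \<notin> D"
  shows "fair_coins (insert x D) =
    do {y \<leftarrow> bernoulli_pmf (1/2); U \<leftarrow> fair_coins D; return_pmf (U(x := y))}"
  unfolding fair_coins_def using assms by (rule Pi_pmf_insert')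

lemma bind_fair_coins_resample:
  assumes "finite D" "x \<in> D"
  shows "bind_pmf (fair_coins D) g =
    bind_pmf (bernoulli_pmf (1/2)) (\<lambda>y. bind_pmf (fair_coins D) (\<lambda>U. g (U(x := y))))"
proof -
  have D: "D = insert x (D - {x})" using assms(2) by auto
  have coins: "fair_coins D =
      do {y \<leftarrow> bernoulli_pmf (1/2); U \<leftarrow> fair_coins (D - {x}); return_pmf (U(x := y))}"
    by (subst D, rule fair_coins_insert) (use assms(1) in auto)
  show ?thesis
    unfolding coins by (simp add: bind_assoc_pmf bind_return_pmf)
qed

lemma bind_fair_coins_override:
  assumes "finite D" "S \<subseteq> D"
  shows "bind_pmf (fair_coins D) g =
    bind_pmf (fair_coins S) (\<lambda>b. bind_pmf (fair_coins D) (\<lambda>U. g (override_on U b S)))"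
  using finite_subset[OF assms(2,1)] assms(2)
proof (induction S rule: finite_induct)
  case empty
  show ?case by (simp add: fair_coins_def bind_return_pmf)
next
  case (insert x S)
  have override: "override_on U (b(x := y)) (insert x S) = override_on (U(x := y)) b S" for U b y
    using insert.hyps(2) by (auto simp: override_on_def)
  have "bind_pmf (fair_coins (insert x S)) (\<lambda>b. bind_pmf (fair_coins D) (\<lambda>U. g (override_on U b (insert x S))))
      = bind_pmf (fair_coins S) (\<lambda>b. bind_pmf (bernoulli_pmf (1/2))
          (\<lambda>y. bind_pmf (fair_coins D) (\<lambda>U. g (override_on (U(x := y)) b S))))"
    by (simp add: fair_coins_insert insert.hyps bind_assoc_pmf bind_return_pmf override)
      (rule bind_commute_pmf)
  also have "\<dots> = bind_pmf (fair_coins S) (\<lambda>b. bind_pmf (fair_coins D) (\<lambda>U. g (override_on U b S)))"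
    using insert.prems by (subst bind_fair_coins_resample[OF assms(1)]) auto
  finally show ?case using insert by simp
qed

lemma nn_integral_fair_coins_resample:
  assumes "finite D" "x \<in> D"
  shows "(\<integral>\<^sup>+U. f U \<partial>fair_coins D) =
    (\<integral>\<^sup>+U. (f (U(x := True)) + f (U(x := False))) / 2 \<partial>fair_coins D)"
proof -
  have "fair_coins D = bind_pmf (bernoulli_pmf (1/2)) (\<lambda>y. map_pmf (\<lambda>U. U(x := y)) (fair_coins D))"
    using bind_fair_coins_resample[OF assms, of return_pmf] by (simp add: map_pmf_def bind_return_pmf')
  then have "(\<integral>\<^sup>+U. f U \<partial>fair_coins D) =
      (\<integral>\<^sup>+U. f U \<partial>bind_pmf (bernoulli_pmf (1/2)) (\<lambda>y. map_pmf (\<lambda>U. U(x := y)) (fair_coins D)))"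
    by (rule arg_cong)
  then show ?thesis
    by (simp add: nn_integral_add nn_integral_divide divide_ennreal_def distrib_right nn_integral_multc)
qed

lemma nn_integral_fair_coins_square:
  assumes "finite D" "finite A" "inj_on h A" "h ` A \<subseteq> D"
  shows "(\<integral>\<^sup>+U. ennreal ((a - (\<Sum>c\<in>A. s c * (of_bool (U (h c)) - 1/2)))\<^sup>2) \<partial>fair_coins D) =
    ennreal (a\<^sup>2 + (\<Sum>c\<in>A. (s c)\<^sup>2) / 4)"
  using assms(2-)
proof (induction A rule: finite_induct)
  case empty
  show ?case by simp
next
  case (insert c A)
  define r where "r U = (\<Sum>c\<in>A. s c * (of_bool (U (h c)) - 1/2))" for U :: "'a \<Rightarrow> bool"
  have "h c \<notin> h ` A" using insert by auto
  then have r_upd: "r (U(h c := y)) = r U" for U y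
    unfolding r_def by (intro sum.cong) (auto simp: image_iff)
  define g where "g U = ennreal ((a - (s c * (of_bool (U (h c)) - 1/2) + r U))\<^sup>2)" for U
  have average: "(g (U(h c := True)) + g (U(h c := False))) / 2 =
      ennreal ((a - r U)\<^sup>2) + ennreal ((s c)\<^sup>2 / 4)" for U
  proof -
    have "((a - (s c / 2 + r U))\<^sup>2 + (a - (- s c / 2 + r U))\<^sup>2) / 2 = (a - r U)\<^sup>2 + (s c)\<^sup>2 / 4"
      by (simp add: power2_eq_square field_simps)
    then show ?thesis
      by (simp add: g_def r_upd ennreal_divide_numeral ennreal_plus[symmetric] del: ennreal_plus)
  qed
  have "(\<integral>\<^sup>+U. ennreal ((a - (\<Sum>c\<in>insert c A. s c * (of_bool (U (h c)) - 1/2)))\<^sup>2) \<partial>fair_coins D)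
      = (\<integral>\<^sup>+U. g U \<partial>fair_coins D)"
    using insert.hyps by (simp add: g_def r_def)
  also have "\<dots> = (\<integral>\<^sup>+U. ennreal ((a - r U)\<^sup>2) + ennreal ((s c)\<^sup>2 / 4) \<partial>fair_coins D)"
    using insert.prems by (subst nn_integral_fair_coins_resample[OF assms(1), of "h c"]) (auto simp: average)
  also have "\<dots> = ennreal (a\<^sup>2 + (\<Sum>c\<in>A. (s c)\<^sup>2) / 4) + ennreal ((s c)\<^sup>2 / 4)"
    using insert by (simp add: nn_integral_add r_def)
  also have "\<dots> = ennreal (a\<^sup>2 + (\<Sum>c\<in>A. (s c)\<^sup>2) / 4 + (s c)\<^sup>2 / 4)"
    by (simp add: sum_nonneg)
  also have "\<dots> = ennreal (a\<^sup>2 + (\<Sum>c\<in>insert c A. (s c)\<^sup>2) / 4)"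
    using insert.hyps by (simp add: field_simps del: ennreal_plus)
  finally show ?case .
qed

lemma exists_ge_of_less_nn_integral_pmf:
  assumes "b < a" "a \<le> (\<integral>\<^sup>+x. f x \<partial>measure_pmf p)"
  shows "\<exists>x. b \<le> f x"
proof (rule ccontr)
  assume "\<nexists>x. b \<le> f x"
  then have "(\<integral>\<^sup>+x. f x \<partial>measure_pmf p) \<le> (\<integral>\<^sup>+x. b \<partial>measure_pmf p)"
    by (intro nn_integral_mono) (simp add: not_le less_imp_le)
  then show False using assms by simp
qed

type_synonym observation = "(nat \<Rightarrow> nat \<Rightarrow> bool) \<times> (nat \<Rightarrow> nat \<Rightarrow> real)"
type_synonym cell = "nat \<times> nat \<times> bool"

definition record_round :: "nat \<Rightarrow> nat \<Rightarrow> (nat \<Rightarrow> bool) \<Rightarrow> (nat \<Rightarrow> real) \<Rightarrow> observation \<Rightarrow> observation" where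
  "record_round N t w y ob =
     (\<lambda>i u. if u = t then i < N \<and> w i else fst ob i u, \<lambda>i u. if u = t then y i else snd ob i u)"

definition no_observation :: observation where
  "no_observation = (\<lambda>i u. False, \<lambda>i u. 0)"

fun observe :: "nat \<Rightarrow> design \<Rightarrow> (cell \<Rightarrow> bool) \<Rightarrow> nat \<Rightarrow> observation pmf" where
  "observe N design Z 0 = return_pmf no_observation"
| "observe N design Z (Suc k) = do {
     ob \<leftarrow> observe N design Z k;
     w \<leftarrow> design (fst ob) (snd ob) (Suc k);
     return_pmf (record_round N (Suc k) w (\<lambda>i. of_bool (i < N \<and> Z (i, Suc k, w i))) ob)}"

definition table_mean :: "(cell \<Rightarrow> bool) \<Rightarrow> nat \<Rightarrow> nat \<Rightarrow> nat \<Rightarrow> bool \<Rightarrow> real" where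
  "table_mean Z = (\<lambda>i t s w. of_bool (Z (i, t, w)))"

definition const_init :: "nat \<Rightarrow> nat pmf" where
  "const_init = (\<lambda>i. return_pmf 0)"

definition const_kernel :: "nat \<Rightarrow> nat \<Rightarrow> bool \<Rightarrow> nat \<Rightarrow> nat pmf" where
  "const_kernel = (\<lambda>i t w s. return_pmf 0)"

definition zero_noise :: "nat \<Rightarrow> nat \<Rightarrow> nat \<Rightarrow> bool \<Rightarrow> real pmf" where
  "zero_noise = (\<lambda>i t s w. return_pmf 0)"

lemma dtv_nonneg: "0 \<le> dtv p q"
  unfolding dtv_def
proof (rule cSUP_upper2[where x = "{}"])
  show "bdd_above (range (\<lambda>A. \<bar>measure_pmf.prob p A - measure_pmf.prob q A\<bar>))"
  proof (rule bdd_aboveI[where M = 1], clarify)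
    fix A
    have "measure_pmf.prob p A \<le> 1" "measure_pmf.prob q A \<le> 1"
      "0 \<le> measure_pmf.prob p A" "0 \<le> measure_pmf.prob q A"
      by auto
    then show "\<bar>measure_pmf.prob p A - measure_pmf.prob q A\<bar> \<le> 1" by linarith
  qed
qed auto

lemma valid_instance_table_mean:
  assumes "\<sigma> \<ge> 0"
  shows "valid_instance \<sigma> tmix N T const_init const_kernel (table_mean Z) zero_noise"
proof -
  have "dtv (return_pmf 0) (return_pmf 0) = 0" by (simp add: dtv_def)
  then show ?thesis
    using assms dtv_nonneg
    by (auto simp: valid_instance_def table_mean_def zero_noise_def const_kernel_def
        integrable_measure_pmf_finite)
qed

lemma traj_table_mean:
  "traj N const_init const_kernel (table_mean Z) zero_noise design k =
     map_pmf (\<lambda>ob. (\<lambda>i u. 0, ob)) (observe N design Z k)"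
proof (induction k)
  case 0
  show ?case by (simp add: const_init_def no_observation_def)
next
  case (Suc k)
  have outcome: "(if i < N then of_bool P else 0) = (of_bool (i < N \<and> P) :: real)" for i P
    by simp
  show ?case
    unfolding traj.simps observe.simps Suc map_bind_pmf bind_map_pmf
    by (rule bind_pmf_cong[OF refl])
      (auto simp: const_kernel_def zero_noise_def table_mean_def record_round_def outcome
        map_bind_pmf bind_return_pmf fun_eq_iff intro!: bind_pmf_cong)
qed

lemma observe_const_design:
  "observe N (const_design b) Z k = return_pmf
     (\<lambda>i u. 1 \<le> u \<and> u \<le> k \<and> i < N \<and> b,
      \<lambda>i u. of_bool (1 \<le> u \<and> u \<le> k \<and> i < N \<and> Z (i, u, b)))"
  by (induction k)
    (auto simp: no_observation_def const_design_def record_round_def bind_return_pmf fun_eq_iff le_Suc_eq)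

definition effect_sum :: "nat \<Rightarrow> nat \<Rightarrow> (cell \<Rightarrow> bool) \<Rightarrow> real" where
  "effect_sum N T Z = (\<Sum>i<N. \<Sum>t\<in>{1..T}. of_bool (Z (i, t, True)) - of_bool (Z (i, t, False)))"

lemma GATE_table_mean:
  "GATE N T const_init const_kernel (table_mean Z) zero_noise = effect_sum N T Z / (real N * real T)"
  unfolding GATE_def traj_table_mean observe_const_design effect_sum_def by simp

lemma MSE_table_mean:
  "MSE N T const_init const_kernel (table_mean Z) zero_noise design est =
    (\<integral>\<^sup>+ob. ennreal ((est (fst ob) (snd ob) - effect_sum N T Z / (real N * real T))\<^sup>2) \<partial>observe N design Z T)"
  unfolding MSE_def traj_table_mean GATE_table_mean by (simp add: case_prod_beta)

definition cells :: "nat \<Rightarrow> nat \<Rightarrow> cell set" where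
  "cells N T = {..<N} \<times> {1..T} \<times> UNIV"

definition round_cells :: "nat \<Rightarrow> nat \<Rightarrow> (nat \<Rightarrow> bool) \<Rightarrow> cell set" where
  "round_cells N t w = (\<lambda>i. (i, t, w i)) ` {..<N}"

fun observe_fresh :: "nat \<Rightarrow> design \<Rightarrow> nat \<Rightarrow> observation pmf" where
  "observe_fresh N design 0 = return_pmf no_observation"
| "observe_fresh N design (Suc k) = do {
     ob \<leftarrow> observe_fresh N design k;
     w \<leftarrow> design (fst ob) (snd ob) (Suc k);
     b \<leftarrow> fair_coins (round_cells N (Suc k) w);
     return_pmf (record_round N (Suc k) w (\<lambda>i. of_bool (i < N \<and> b (i, Suc k, w i))) ob)}"

definition complete_table :: "nat \<Rightarrow> nat \<Rightarrow> observation \<Rightarrow> (cell \<Rightarrow> bool) \<Rightarrow> cell \<Rightarrow> bool" where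
  "complete_table N k ob U = (\<lambda>(i, t, v).
     if i < N \<and> 1 \<le> t \<and> t \<le> k \<and> fst ob i t = v then snd ob i t = 1 else U (i, t, v))"

lemma finite_cells: "finite (cells N T)"
  by (simp add: cells_def)

lemma round_cells_subset: "t \<in> {1..T} \<Longrightarrow> round_cells N t w \<subseteq> cells N T"
  by (auto simp: round_cells_def cells_def)

lemma complete_table_next_round:
  "complete_table N k ob U (i, Suc k, v) = U (i, Suc k, v)"
  by (simp add: complete_table_def)

lemma complete_table_override_round:
  "complete_table N k ob (override_on U b (round_cells N (Suc k) w)) =
   complete_table N (Suc k) (record_round N (Suc k) w (\<lambda>i. of_bool (i < N \<and> b (i, Suc k, w i))) ob) U"
  by (auto simp: complete_table_def record_round_def round_cells_def override_on_def fun_eq_iff)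

lemma observe_lazy_sampling:
  assumes "k \<le> T"
  shows "bind_pmf (fair_coins (cells N T)) (\<lambda>Z. map_pmf (Pair Z) (observe N design Z k)) =
    bind_pmf (observe_fresh N design k) (\<lambda>ob. map_pmf (\<lambda>U. (complete_table N k ob U, ob)) (fair_coins (cells N T)))"
  using assms
proof (induction k)
  case 0
  have "complete_table N 0 ob U = U" for ob U by (auto simp: complete_table_def)
  then show ?case by (simp add: map_pmf_def bind_return_pmf)
next
  case (Suc k)
  let ?Z = "fair_coins (cells N T)"
  let ?bits = "\<lambda>Z w i. of_bool (i < N \<and> Z (i, Suc k, w i))"
  let ?round = "\<lambda>(Z, ob). bind_pmf (design (fst ob) (snd ob) (Suc k))
      (\<lambda>w. return_pmf (Z, record_round N (Suc k) w (?bits Z w) ob))"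
  have override_bits: "?bits (override_on U b (round_cells N (Suc k) w)) w = ?bits b w" for U b w
    by (auto simp: round_cells_def fun_eq_iff)
  have resample_round: "bind_pmf ?Z (\<lambda>U.
        return_pmf (complete_table N k ob U, record_round N (Suc k) w (?bits U w) ob)) =
      bind_pmf (fair_coins (round_cells N (Suc k) w)) (\<lambda>b. bind_pmf ?Z (\<lambda>U.
        return_pmf (complete_table N k ob (override_on U b (round_cells N (Suc k) w)),
          record_round N (Suc k) w (?bits b w) ob)))" for ob w
    using Suc.prems
    by (subst bind_fair_coins_override[OF finite_cells round_cells_subset[where t = "Suc k" and w = w]])
      (auto simp: override_bits)
  have "bind_pmf ?Z (\<lambda>Z. map_pmf (Pair Z) (observe N design Z (Suc k))) =
      bind_pmf (bind_pmf ?Z (\<lambda>Z. map_pmf (Pair Z) (observe N design Z k))) ?round"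
    by (simp add: map_pmf_def bind_assoc_pmf bind_return_pmf)
  also have "\<dots> = bind_pmf (observe_fresh N design k) (\<lambda>ob.
      bind_pmf (design (fst ob) (snd ob) (Suc k)) (\<lambda>w. bind_pmf ?Z (\<lambda>U.
        return_pmf (complete_table N k ob U, record_round N (Suc k) w (?bits U w) ob))))"
    using Suc by (simp add: map_pmf_def bind_assoc_pmf bind_return_pmf complete_table_next_round)
      (subst bind_commute_pmf, rule refl)
  also have "\<dots> = bind_pmf (observe_fresh N design k) (\<lambda>ob.
      bind_pmf (design (fst ob) (snd ob) (Suc k)) (\<lambda>w.
        bind_pmf (fair_coins (round_cells N (Suc k) w)) (\<lambda>b. bind_pmf ?Z (\<lambda>U.
          return_pmf (complete_table N k ob (override_on U b (round_cells N (Suc k) w)),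
            record_round N (Suc k) w (?bits b w) ob)))))"
    by (simp only: resample_round)
  also have "\<dots> = bind_pmf (observe_fresh N design (Suc k))
      (\<lambda>ob. map_pmf (\<lambda>U. (complete_table N (Suc k) ob U, ob)) ?Z)"
    by (simp add: map_pmf_def bind_assoc_pmf bind_return_pmf complete_table_override_round)
  finally show ?case .
qed

definition observed_effect :: "nat \<Rightarrow> nat \<Rightarrow> observation \<Rightarrow> real" where
  "observed_effect N T ob = (\<Sum>i<N. \<Sum>t\<in>{1..T}.
     (if fst ob i t then 1 else -1) * (of_bool (snd ob i t = 1) - 1/2))"

lemma effect_sum_complete_table:
  "effect_sum N T (complete_table N T ob U) = observed_effect N T ob +
     (\<Sum>(i, t)\<in>{..<N} \<times> {1..T}. (if fst ob i t then -1 else 1) * (of_bool (U (i, t, \<not> fst ob i t)) - 1/2))"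
  unfolding effect_sum_def observed_effect_def
  by (auto simp: sum.cartesian_product[symmetric] sum.distrib[symmetric] complete_table_def
      intro!: sum.cong)

lemma mean_square_complete_table_ge:
  assumes "N \<ge> 1" "T \<ge> 1"
  shows "ennreal (1 / (4 * real N * real T)) \<le>
    (\<integral>\<^sup>+U. ennreal ((e - effect_sum N T (complete_table N T ob U) / (real N * real T))\<^sup>2) \<partial>fair_coins (cells N T))"
proof -
  let ?n = "real N * real T"
  define A where "A = {..<N} \<times> {1..T}"
  define h where "h = (\<lambda>(i, t). (i, t, \<not> fst ob i t))"
  define s where "s = (\<lambda>(i, t). (if fst ob i t then -1 else 1) / ?n)"
  have n: "?n > 0" using assms by simp
  have h: "inj_on h A" "h ` A \<subseteq> cells N T"
    by (auto simp: inj_on_def h_def A_def cells_def)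
  have "(s c)\<^sup>2 = 1 / ?n\<^sup>2" for c
    by (simp add: s_def case_prod_beta power_divide)
  then have squares: "(\<Sum>c\<in>A. (s c)\<^sup>2) = 1 / ?n"
    using n by (simp add: A_def card_cartesian_product power2_eq_square)
  have error: "e - effect_sum N T (complete_table N T ob U) / ?n =
      (e - observed_effect N T ob / ?n) - (\<Sum>c\<in>A. s c * (of_bool (U (h c)) - 1/2))" for U
    unfolding effect_sum_complete_table
    by (simp add: A_def s_def h_def case_prod_beta add_divide_distrib sum_divide_distrib)
  have "ennreal (1 / (4 * ?n)) \<le> ennreal ((e - observed_effect N T ob / ?n)\<^sup>2 + (\<Sum>c\<in>A. (s c)\<^sup>2) / 4)"
    using squares by (intro ennreal_leI) (simp add: mult.commute)
  also have "\<dots> = (\<integral>\<^sup>+U. ennreal ((e - effect_sum N T (complete_table N T ob U) / ?n)\<^sup>2) \<partial>fair_coins (cells N T))"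
    unfolding error using h by (simp add: nn_integral_fair_coins_square finite_cells A_def)
  finally show ?thesis by (simp add: mult.assoc)
qed

lemma bayes_risk_table_mean_ge:
  assumes "N \<ge> 1" "T \<ge> 1"
  shows "ennreal (1 / (4 * real N * real T)) \<le>
    (\<integral>\<^sup>+Z. MSE N T const_init const_kernel (table_mean Z) zero_noise design est \<partial>fair_coins (cells N T))"
proof -
  let ?err = "\<lambda>(Z, ob). ennreal ((est (fst ob) (snd ob) - effect_sum N T Z / (real N * real T))\<^sup>2)"
  have "ennreal (1 / (4 * real N * real T)) =
      (\<integral>\<^sup>+ob. ennreal (1 / (4 * real N * real T)) \<partial>observe_fresh N design T)"
    by simp
  also have "\<dots> \<le>
      (\<integral>\<^sup>+ob. \<integral>\<^sup>+U. ?err (complete_table N T ob U, ob) \<partial>fair_coins (cells N T) \<partial>observe_fresh N design T)"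
    by (intro nn_integral_mono) (simp add: mean_square_complete_table_ge[OF assms])
  also have "\<dots> = (\<integral>\<^sup>+p. ?err p \<partial>bind_pmf (observe_fresh N design T)
      (\<lambda>ob. map_pmf (\<lambda>U. (complete_table N T ob U, ob)) (fair_coins (cells N T))))"
    by simp
  also have "\<dots> = (\<integral>\<^sup>+p. ?err p \<partial>bind_pmf (fair_coins (cells N T)) (\<lambda>Z. map_pmf (Pair Z) (observe N design Z T)))"
    by (simp only: observe_lazy_sampling[OF order.refl])
  also have "\<dots> = (\<integral>\<^sup>+Z. MSE N T const_init const_kernel (table_mean Z) zero_noise design est \<partial>fair_coins (cells N T))"
    by (simp add: MSE_table_mean)
  finally show ?thesis .
qed

theorem mainTheorem7:
  shows "\<exists>c>0. \<forall>(\<sigma>::real) (tmix::real) (N::nat) (T::nat) (design::design)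
            (est::(nat \<Rightarrow> nat \<Rightarrow> bool) \<Rightarrow> (nat \<Rightarrow> nat \<Rightarrow> real) \<Rightarrow> real).
     \<sigma> \<ge> 0 \<longrightarrow> tmix > 0 \<longrightarrow> N \<ge> 1 \<longrightarrow> T \<ge> 1 \<longrightarrow>
     (\<exists>init P mu noise. valid_instance \<sigma> tmix N T init P mu noise \<and>
        MSE N T init P mu noise design est \<ge> ennreal (c / (real N * real T)))"
proof (intro exI[of _ "1/8"] conjI allI impI)
  show "(0::real) < 1/8" by simp
  fix \<sigma> tmix :: real and N T :: nat and design :: design
    and est :: "(nat \<Rightarrow> nat \<Rightarrow> bool) \<Rightarrow> (nat \<Rightarrow> nat \<Rightarrow> real) \<Rightarrow> real"
  assume "\<sigma> \<ge> 0" "tmix > 0" "N \<ge> 1" "T \<ge> 1"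
  have "ennreal (1/8 / (real N * real T)) < ennreal (1 / (4 * real N * real T))"
    using \<open>N \<ge> 1\<close> \<open>T \<ge> 1\<close> by (simp add: ennreal_less_iff field_simps)
  then obtain Z where "ennreal (1/8 / (real N * real T)) \<le>
      MSE N T const_init const_kernel (table_mean Z) zero_noise design est"
    using exists_ge_of_less_nn_integral_pmf bayes_risk_table_mean_ge[OF \<open>N \<ge> 1\<close> \<open>T \<ge> 1\<close>] by blast
  then show "\<exists>init P mu noise. valid_instance \<sigma> tmix N T init P mu noise \<and>
      MSE N T init P mu noise design est \<ge> ennreal (1/8 / (real N * real T))"
    using valid_instance_table_mean[OF \<open>\<sigma> \<ge> 0\<close>] by blast
qed

end
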